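(* Let $(\Omega,\mathcal R)$ be a chemical network with cycle space $\mathcal C$, let $U\subset\Omega$ be nonempty, $V=\Omega\setminus U$, and let $\mathcal C_V$ be the cycle space of the $U$-reduced network $(V,\mathcal R_V)$. Assume $|\mathcal R_V|=|\mathcal R|$. Then $\mathcal C\subset\mathcal C_V$. Moreover, $\mathcal C=\mathcal C_V$ if and only if $\ker(\mathbf R_V)\subset\ker(\pi_U\mathbf R)$.
   Context: A chemical network is $(\Omega,\mathcal R)$ with $\Omega=\{1,\dots,N\}$ and $\mathcal R$ a finite set of nonzero vectors of $\mathbb Z^N$. $I(R)=\{i:R(i)<0\}$, $F(R)=\{i:R(i)>0\}$. $\mathcal R_s\subset\mathcal R$ consists of all $R$ with $-R\notin\mathcal R$ and, for each pair $\{R,-R\}\subset\mathcal R$, the one with $\min I(R)<\min F(R)$; the matrix of reactions $\mathbf R$ has the elements of $\mathcal R_s$ as columns, and the cycle space is $\mathcal C=\ker\mathbf R$. For $A\subset\Omega$, $\pi_Av=(v(i))_{i\in A}$. The $U$-reduced reactions are $\mathcal R_V=\{\pi_V\bar R:\bar R\in\mathcal R,\ \pi_V\bar R\neq0\}$; $\mathbf R_V$ is the matrix of reactions of $(V,\mathcal R_V)$ and $\mathcal C_V=\ker\mathbf R_V$. $\pi_V\mathbf R$ and $\pi_U\mathbf R$ are the matrices obtained by applying $\pi_V$, resp. $\pi_U$, to every column of $\mathbf R$; when $|\mathcal R_V|=|\mathcal R|$ one has $\pi_V\mathbf R=\mathbf R_V$ (columns ordered correspondingly), so $\mathcal C$ and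 $\mathcal C_V$ are subspaces of the same space. *)

theory Defs
  imports Complex_Main "HOL-Library.Function_Algebras"
begin

text \<open>Species are Omega = {1..N}; a vector of Z^N is a function nat => int vanishing
outside {1..N}. A vector of Z^A (A a subset of Omega) is represented by its
zero extension.\<close>

definition chem_network :: "nat \<Rightarrow> (nat \<Rightarrow> int) set \<Rightarrow> bool" where
  "chem_network N RR \<longleftrightarrow> finite RR \<and>
     (\<forall>R\<in>RR. R \<noteq> 0 \<and> (\<forall>i. i \<notin> {1..N} \<longrightarrow> R i = 0))"

definition I_set :: "(nat \<Rightarrow> int) \<Rightarrow> nat set" where
  "I_set R = {i. R i < 0}"

definition F_set :: "(nat \<Rightarrow> int) \<Rightarrow> nat set" where
  "F_set R = {i. R i > 0}"

text \<open>min A < min B, with the convention min {} = infinity.\<close>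
definition min_less :: "nat set \<Rightarrow> nat set \<Rightarrow> bool" where
  "min_less A B \<longleftrightarrow> (\<exists>a\<in>A. \<forall>b\<in>B. a < b)"

definition R_s :: "(nat \<Rightarrow> int) set \<Rightarrow> (nat \<Rightarrow> int) set" where
  "R_s RR = {R\<in>RR. - R \<notin> RR \<or> min_less (I_set R) (F_set R)}"

definition proj :: "nat set \<Rightarrow> (nat \<Rightarrow> int) \<Rightarrow> (nat \<Rightarrow> int)" where
  "proj A v = (\<lambda>i. if i \<in> A then v i else 0)"

definition reduced :: "nat set \<Rightarrow> (nat \<Rightarrow> int) set \<Rightarrow> (nat \<Rightarrow> int) set" where
  "reduced V RR = {proj V R | R. R \<in> RR \<and> proj V R \<noteq> 0}"

text \<open>Real kernel of the matrix whose columns are indexed by J, column j being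
the vector col j, with rows indexed by the set rows.\<close>
definition ker_mat :: "'j set \<Rightarrow> ('j \<Rightarrow> nat \<Rightarrow> int) \<Rightarrow> nat set \<Rightarrow> ('j \<Rightarrow> real) set" where
  "ker_mat J col rows = {c. (\<forall>j. j \<notin> J \<longrightarrow> c j = 0) \<and>
       (\<forall>i\<in>rows. (\<Sum>j\<in>J. c j * of_int (col j i)) = 0)}"

text \<open>Cycle space C = ker R, R having the elements of R_s as columns.\<close>
definition cycle_space :: "nat \<Rightarrow> (nat \<Rightarrow> int) set \<Rightarrow> ((nat \<Rightarrow> int) \<Rightarrow> real) set" where
  "cycle_space N RR = ker_mat (R_s RR) id {1..N}"

definition ker_proj :: "nat set \<Rightarrow> (nat \<Rightarrow> int) set \<Rightarrow> ((nat \<Rightarrow> int) \<Rightarrow> real) set" where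
  "ker_proj A RR = ker_mat (R_s RR) (proj A) A"

text \<open>Cycle space C_V of the U-reduced network, under the paper's identification
R_V = pi_V R (valid when |R_V| = |R|, columns ordered correspondingly).\<close>
definition reduced_cycle_space :: "nat \<Rightarrow> nat set \<Rightarrow> (nat \<Rightarrow> int) set \<Rightarrow> ((nat \<Rightarrow> int) \<Rightarrow> real) set" where
  "reduced_cycle_space N U RR = ker_proj ({1..N} - U) RR"

end

theory Submission
  imports Defs
begin

text \<open>The rows of \<open>\<^bold>R\<close> split into the \<open>V\<close>-rows and the \<open>U\<close>-rows, and projecting the
columns onto \<open>V\<close> does not change the \<open>V\<close>-rows. Hence \<open>\<C> = \<C>\<^sub>V \<inter> ker (\<pi>\<^sub>U \<^bold>R)\<close>, which gives
both claims at once. The hypothesis \<open>|\<R>\<^sub>V| = |\<R>|\<close> only justifies identifying \<open>\<^bold>R\<^sub>V\<close> with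
\<open>\<pi>\<^sub>V \<^bold>R\<close>; that identification is already built into \<open>reduced_cycle_space\<close>, so the
proof does not use it.\<close>

lemma ker_mat_Un_rows:
  "ker_mat J col (A \<union> B) = ker_mat J col A \<inter> ker_mat J col B"
  by (auto simp: ker_mat_def)

lemma ker_mat_proj_cols:
  "ker_mat J (proj A) A = ker_mat J id A"
  by (simp add: ker_mat_def proj_def)

lemma cycle_space_eq_Int_ker_proj:
  assumes "U \<subseteq> {1..N}"
  shows "cycle_space N RR = reduced_cycle_space N U RR \<inter> ker_proj U RR"
proof -
  have "{1..N} = ({1..N} - U) \<union> U"
    using assms by blast
  then show ?thesis
    unfolding cycle_space_def reduced_cycle_space_def ker_proj_def
    by (metis ker_mat_Un_rows ker_mat_proj_cols)
qed

theorem lemma4p5: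
  fixes N :: nat and RR :: "(nat \<Rightarrow> int) set" and U :: "nat set"
  assumes "chem_network N RR"
    and "U \<subseteq> {1..N}" and "U \<noteq> {}"
    and "card (reduced ({1..N} - U) RR) = card RR"
  shows "cycle_space N RR \<subseteq> reduced_cycle_space N U RR \<and>
         (cycle_space N RR = reduced_cycle_space N U RR \<longleftrightarrow>
            reduced_cycle_space N U RR \<subseteq> ker_proj U RR)"
  using cycle_space_eq_Int_ker_proj[OF assms(2)] by blast

end
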